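(* For $0<q<1$: (1) $$\sum_{r,k\ge1}\frac{q^{(2r-1)(2k-1)}}{2r-1}=\frac{\alpha}{16}\,{}_2F_1\left[\left.\begin{matrix}1,1\\2\end{matrix}\right|\alpha\right]\;\Big(=-\tfrac1{16}\log(1-\alpha)\Big);$$ (2) $$\sum_{r,k\ge1}\frac{q^{2(r-1/2)(k-1/2)}}{2r-1}=\frac{\alpha^{1/2}}{4}\,{}_2F_1\left[\left.\begin{matrix}\tfrac12,1\\ \tfrac32\end{matrix}\right|\alpha\right],$$ where $\alpha=\alpha(q)$.
   Context: $\theta_2(q)=\sum_{n\in\mathbb Z}q^{(n+1/2)^2}$, $\theta_3(q)=\sum_{n\in\mathbb Z}q^{n^2}$, and $\alpha(q)=\theta_2^4(q)/\theta_3^4(q)$, which lies in $(0,1)$ for $0<q<1$. ${}_2F_1\left[\begin{matrix}a,b\\c\end{matrix}\middle| z\right]=\sum_{n\ge0}\frac{(a)_n(b)_n}{(c)_n}\frac{z^n}{n!}$ with $(a)_n=\Gamma(a+n)/\Gamma(a)$. *)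

theory Defs
  imports "HOL-Analysis.Analysis"
begin

definition theta2 :: "real \<Rightarrow> real" where
  "theta2 q = (\<Sum>\<^sub>\<infinity>n\<in>(UNIV::int set). q powr ((real_of_int n + 1/2)^2))"

definition theta3 :: "real \<Rightarrow> real" where
  "theta3 q = (\<Sum>\<^sub>\<infinity>n\<in>(UNIV::int set). q powr ((real_of_int n)^2))"

definition alpha :: "real \<Rightarrow> real" where
  "alpha q = theta2 q ^ 4 / theta3 q ^ 4"

definition hyp2F1 :: "real \<Rightarrow> real \<Rightarrow> real \<Rightarrow> real \<Rightarrow> real" where
  "hyp2F1 a b c z =
     (\<Sum>n. pochhammer a n * pochhammer b n / pochhammer c n * z ^ n / fact n)"

end

theory Submission
  imports Defs
begin

text \<open>Splitting the lattice sum \<theta>(q)^2 over \<int>^2 by the parity of m + n gives the duplication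
  formulas for \<theta>2^2, \<theta>3^2, \<theta>4^2 and hence Jacobi's identity \<theta>3^4 = \<theta>2^4 + \<theta>4^4,
  i.e. 1 - \<alpha> = (\<theta>4/\<theta>3)^4. Euler's series E(x) = \<Sum> q^(m^2) x^m / (q^2; q^2)_m satisfies
  E(x) = (1 + q x) E(q^2 x), so E(x) = \<Prod> (1 + q^(2n+1) x); and since the coefficients S_k of
  E(x) E(1/x) satisfy S_(k+1) = q^(2k+1) S_k, E(1)^2 and E(-1)^2 are the same positive constant
  times \<theta>3 and \<theta>4. Taking logarithms, ln (\<theta>3/\<theta>4) = 4 \<Sum> artanh q^(2n+1), and expanding artanh
  gives the double series of (1). Part (2) is the same identity at \<surd>q: duplication gives
  \<theta>3(\<surd>q)^2 = \<theta>3^2 + \<theta>2^2 and \<theta>4(\<surd>q)^2 = \<theta>3^2 - \<theta>2^2, so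
  ln (\<theta>3(\<surd>q)/\<theta>4(\<surd>q)) = artanh (\<theta>2^2/\<theta>3^2) = artanh \<surd>\<alpha>.\<close>

lemma has_sum_product_real:
  fixes f g :: "_ \<Rightarrow> real"
  assumes f: "(f has_sum a) A" and g: "(g has_sum b) B"
  shows "((\<lambda>(x,y). f x * g y) has_sum a * b) (A \<times> B)"
proof -
  have fs: "(\<lambda>x. norm (f x)) summable_on A" and gs: "(\<lambda>y. norm (g y)) summable_on B"
    using f g summable_on_iff_abs_summable_on_real has_sum_imp_summable by blast+
  have "(\<lambda>z. norm ((\<lambda>(x,y). f x * g y) z)) summable_on (A \<times> B)"
  proof (rule iffD2[OF Infinite_Sum.abs_summable_on_Sigma_iff], intro conjI ballI)
    fix x assume "x \<in> A"
    show "(\<lambda>y. norm ((\<lambda>(x,y). f x * g y) (x, y))) summable_on B"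
      using summable_on_cmult_right[OF gs, of "norm (f x)"] by (simp add: abs_mult)
  next
    have "(\<lambda>x. norm (f x) * (\<Sum>\<^sub>\<infinity>y\<in>B. norm (g y))) summable_on A"
      using summable_on_cmult_left[OF fs] .
    then show "(\<lambda>x. norm (\<Sum>\<^sub>\<infinity>y\<in>B. norm ((\<lambda>(x,y). f x * g y) (x, y)))) summable_on A"
      by (simp add: abs_mult infsum_cmult_right' infsum_nonneg)
  qed
  then have "(\<lambda>(x,y). f x * g y) summable_on (A \<times> B)"
    using summable_on_iff_abs_summable_on_real by blast
  then show ?thesis
    using has_sum_cmult_right[OF g] has_sum_cmult_left[OF f]
    by (intro has_sum_SigmaI[where g = "\<lambda>x. f x * b"]) auto
qed

lemma has_sum_product_realI:
  fixes h :: "'a \<times> 'b \<Rightarrow> real"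
  assumes "(f has_sum a) UNIV" and "(g has_sum b) UNIV" and "\<And>x y. h (x, y) = f x * g y"
  shows "(h has_sum a * b) UNIV"
proof -
  have "h = (\<lambda>(x,y). f x * g y)"
    using assms(3) by auto
  then show ?thesis
    using has_sum_product_real[OF assms(1,2)] by simp
qed

lemma summable_on_int_if_halves:
  fixes f :: "int \<Rightarrow> real"
  assumes "(\<lambda>n::nat. f (int n)) summable_on UNIV" and "(\<lambda>n::nat. f (- int n)) summable_on UNIV"
  shows "f summable_on UNIV"
proof -
  have "f summable_on range int"
    using summable_on_reindex[of int UNIV f] assms(1) by (simp add: o_def)
  moreover have "f summable_on range (\<lambda>n::nat. - int n)"
    using summable_on_reindex[of "\<lambda>n::nat. - int n" UNIV f] assms(2) by (simp add: o_def inj_on_def)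
  moreover have "range int \<union> range (\<lambda>n::nat. - int n) = UNIV"
  proof -
    have "x \<in> range int \<union> range (\<lambda>n::nat. - int n)" for x :: int
      by (cases "x \<ge> 0") (auto intro: image_eqI[of _ _ "nat x"] image_eqI[of _ _ "nat (-x)"])
    then show ?thesis by auto
  qed
  ultimately show ?thesis
    using summable_on_union by metis
qed

text \<open>\<open>(a, b) \<mapsto> (a + b, a - b)\<close> maps \<open>\<int>\<^sup>2\<close> bijectively onto the pairs with even coordinate sum,
  and \<open>(a, b) \<mapsto> (a + b + 1, a - b)\<close> onto those with odd coordinate sum.\<close>

lemma has_sum_int_pair_parity_split:
  fixes F :: "int \<times> int \<Rightarrow> 'a::topological_comm_monoid_add"
  assumes even: "((\<lambda>(a,b). F (a+b, a-b)) has_sum S) UNIV"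
    and odd: "((\<lambda>(a,b). F (a+b+1, a-b)) has_sum T) UNIV"
  shows "(F has_sum S + T) UNIV"
proof -
  have S: "(F has_sum S) {z. even (fst z + snd z)}"
    using even by (subst (asm) has_sum_reindex_bij_witness[where
        i = "\<lambda>(m,n). ((m+n) div 2, (m-n) div 2)" and j = "\<lambda>(a,b). (a+b, a-b)"])
      (auto simp: split_beta, presburger+)
  have T: "(F has_sum T) {z. odd (fst z + snd z)}"
    using odd by (subst (asm) has_sum_reindex_bij_witness[where
        i = "\<lambda>(m,n). ((m+n-1) div 2, (m-n-1) div 2)" and j = "\<lambda>(a,b). (a+b+1, a-b)"])
      (auto simp: split_beta, presburger+)
  have "{z. even (fst z + snd z)} \<union> {z. odd (fst z + snd z)} = (UNIV :: (int \<times> int) set)"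
    by auto
  then show ?thesis
    using has_sum_Un_disjoint[OF S T] by auto
qed

lemma has_sum_int_pair_parity_split':
  fixes F :: "int \<times> int \<Rightarrow> 'a::topological_comm_monoid_add"
  assumes even: "((\<lambda>(a,b). F (a+b, a-b)) has_sum S) UNIV"
    and odd: "((\<lambda>(a,b). F (a+b, a-b-1)) has_sum T) UNIV"
  shows "(F has_sum S + T) UNIV"
proof -
  have "((\<lambda>(a,b). F (a+b+1, a-b)) has_sum T) UNIV"
    using odd by (subst (asm) has_sum_reindex_bij_witness[where
        i = "\<lambda>(a,b). (a+1, b)" and j = "\<lambda>(a,b). (a-1, b)"]) (auto simp: algebra_simps)
  then show ?thesis
    using has_sum_int_pair_parity_split[OF even] by blast
qed

lemma square_int_shift_ge:
  fixes n :: int and c :: real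
  assumes "\<bar>c\<bar> \<le> 1/2"
  shows "real_of_int \<bar>n\<bar> - 1 \<le> (real_of_int n + c)^2"
proof (cases "n = 0")
  case False
  then have "\<bar>real_of_int n\<bar> - 1/2 \<le> \<bar>real_of_int n + c\<bar>" and "1 \<le> \<bar>real_of_int n\<bar>"
    using assms by linarith+
  then have "(\<bar>real_of_int n\<bar> - 1/2)^2 \<le> \<bar>real_of_int n + c\<bar>^2"
    by (intro power_mono) auto
  moreover have "real_of_int \<bar>n\<bar> - 1 \<le> (\<bar>real_of_int n\<bar> - 1/2)^2"
    using sum_power2_ge_zero[of "\<bar>real_of_int n\<bar> - 1" 0] by (simp add: power2_eq_square algebra_simps)
  ultimately show ?thesis
    unfolding power2_abs by linarith
qed (smt (verit) of_int_0 abs_zero zero_le_power2)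

lemma theta_series_summable:
  fixes q c :: real
  assumes q: "0 < q" "q < 1" and c: "\<bar>c\<bar> \<le> 1/2"
  shows "(\<lambda>n::int. q powr ((real_of_int n + c)^2)) summable_on UNIV"
proof -
  have bound: "q powr ((real_of_int n + c)^2) \<le> q ^ nat \<bar>n\<bar> / q" for n :: int
  proof -
    have "q powr ((real_of_int n + c)^2) \<le> q powr (real (nat \<bar>n\<bar>) - 1)"
      using square_int_shift_ge[OF c, of n] q by (intro powr_mono') auto
    also have "\<dots> = q powr (real (nat \<bar>n\<bar>)) / q"
      using q by (simp only: powr_diff powr_one)
    also have "\<dots> = q ^ nat \<bar>n\<bar> / q"
      using q by (simp only: powr_realpow)
    finally show ?thesis .
  qed
  have "summable (\<lambda>n::nat. q ^ n / q)"
    using q by (intro summable_divide summable_geometric) auto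
  then have geometric: "(\<lambda>n::nat. q ^ n / q) summable_on UNIV"
    using q by (subst summable_on_UNIV_nonneg_real_iff) auto
  show ?thesis
    by (rule summable_on_int_if_halves; rule summable_on_comparison_test[OF geometric])
       (use bound[of "int _"] bound[of "- int _"] in auto)
qed

definition theta4 :: "real \<Rightarrow> real" where
  "theta4 q = (\<Sum>\<^sub>\<infinity>n\<in>(UNIV::int set). (-1) ^ nat \<bar>n\<bar> * q powr ((real_of_int n)^2))"

lemma minus_one_power_nat_abs: "(-1::real) ^ nat \<bar>n\<bar> = (if even n then 1 else -1)"
  by (simp add: even_nat_iff)

context
  fixes q :: real
  assumes q: "0 < q" "q < 1"
begin

lemma theta2_has_sum: "((\<lambda>n::int. q powr ((real_of_int n + 1/2)^2)) has_sum theta2 q) UNIV"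
  unfolding theta2_def using theta_series_summable[OF q, of "1/2"] by (intro has_sum_infsum) simp

lemma theta3_has_sum: "((\<lambda>n::int. q powr ((real_of_int n)^2)) has_sum theta3 q) UNIV"
  unfolding theta3_def using theta_series_summable[OF q, of 0] by (intro has_sum_infsum) simp

lemma theta4_has_sum: "((\<lambda>n::int. (-1) ^ nat \<bar>n\<bar> * q powr ((real_of_int n)^2)) has_sum theta4 q) UNIV"
proof -
  have "(\<lambda>n::int. norm ((-1) ^ nat \<bar>n\<bar> * q powr ((real_of_int n)^2))) summable_on UNIV"
    using theta_series_summable[OF q, of 0] by (simp add: abs_mult)
  then show ?thesis
    unfolding theta4_def using summable_on_iff_abs_summable_on_real has_sum_infsum by blast
qed

lemma theta2_pos: "0 < theta2 q"
proof -
  have "(\<Sum>n\<in>{0::int}. q powr ((real_of_int n + 1/2)^2)) \<le> theta2 q"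
    by (rule finite_sum_le_has_sum[OF theta2_has_sum]) auto
  moreover have "0 < (\<Sum>n\<in>{0::int}. q powr ((real_of_int n + 1/2)^2))"
    using q by simp
  ultimately show ?thesis
    by linarith
qed

lemma theta3_pos: "0 < theta3 q"
proof -
  have "(\<Sum>n\<in>{0::int}. q powr ((real_of_int n)^2)) \<le> theta3 q"
    by (rule finite_sum_le_has_sum[OF theta3_has_sum]) auto
  then show ?thesis
    using q by simp
qed

end

lemma powr_mult_eq_square_powr_mult:
  fixes q x y u v :: real
  assumes "0 < q" and "x + y = 2 * (u + v)"
  shows "q powr x * q powr y = (q^2) powr u * (q^2) powr v"
proof -
  have "q^2 = q powr 2"
    using assms(1) by (simp add: powr_numeral)
  then have "(q^2) powr u * (q^2) powr v = q powr (2 * (u + v))"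
    by (simp add: powr_powr powr_add[symmetric] algebra_simps)
  then show ?thesis
    using assms(2) by (simp add: powr_add[symmetric])
qed

context
  fixes q :: real
  assumes q: "0 < q" "q < 1"
begin

lemma square_nome_bounds: "0 < q^2" "q^2 < (1::real)"
  using q by (simp_all add: power_less_one_iff)

lemma theta3_square_duplication: "theta3 q ^ 2 = theta3 (q^2) ^ 2 + theta2 (q^2) ^ 2"
proof -
  define F where "F = (\<lambda>(m,n). q powr ((real_of_int m)^2) * q powr ((real_of_int n)^2))"
  have lhs: "(F has_sum theta3 q * theta3 q) UNIV"
    by (rule has_sum_product_realI[OF theta3_has_sum[OF q] theta3_has_sum[OF q]]) (simp add: F_def)
  have rhs: "(F has_sum theta3 (q^2) * theta3 (q^2) + theta2 (q^2) * theta2 (q^2)) UNIV"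
  proof (rule has_sum_int_pair_parity_split)
    show "((\<lambda>(a,b). F (a+b, a-b)) has_sum theta3 (q^2) * theta3 (q^2)) UNIV"
      by (rule has_sum_product_realI[OF theta3_has_sum[OF square_nome_bounds] theta3_has_sum[OF square_nome_bounds]])
         (simp add: F_def, rule powr_mult_eq_square_powr_mult[OF q(1)], simp add: algebra_simps power2_eq_square)
    show "((\<lambda>(a,b). F (a+b+1, a-b)) has_sum theta2 (q^2) * theta2 (q^2)) UNIV"
      by (rule has_sum_product_realI[OF theta2_has_sum[OF square_nome_bounds] theta2_has_sum[OF square_nome_bounds]])
         (simp add: F_def, rule powr_mult_eq_square_powr_mult[OF q(1)], simp add: algebra_simps power2_eq_square)
  qed
  show ?thesis
    using has_sum_unique[OF lhs rhs] by (simp add: power2_eq_square)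
qed

lemma theta4_square_duplication: "theta4 q ^ 2 = theta3 (q^2) ^ 2 - theta2 (q^2) ^ 2"
proof -
  define F where "F = (\<lambda>(m,n). (-1) ^ nat \<bar>m\<bar> * (-1) ^ nat \<bar>n\<bar> *
                                (q powr ((real_of_int m)^2) * q powr ((real_of_int n)^2)))"
  have sign_even: "(-1::real) ^ nat \<bar>a+b\<bar> * (-1) ^ nat \<bar>a-b\<bar> = 1"
    and sign_odd: "(-1::real) ^ nat \<bar>a+b+1\<bar> * (-1) ^ nat \<bar>a-b\<bar> = -1" for a b :: int
    by (simp_all add: minus_one_power_nat_abs)
  have lhs: "(F has_sum theta4 q * theta4 q) UNIV"
    by (rule has_sum_product_realI[OF theta4_has_sum[OF q] theta4_has_sum[OF q]]) (simp add: F_def mult_ac)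
  have rhs: "(F has_sum theta3 (q^2) * theta3 (q^2) + (- theta2 (q^2)) * theta2 (q^2)) UNIV"
  proof (rule has_sum_int_pair_parity_split)
    show "((\<lambda>(a,b). F (a+b, a-b)) has_sum theta3 (q^2) * theta3 (q^2)) UNIV"
      by (rule has_sum_product_realI[OF theta3_has_sum[OF square_nome_bounds] theta3_has_sum[OF square_nome_bounds]])
         (simp add: F_def sign_even, rule powr_mult_eq_square_powr_mult[OF q(1)],
          simp add: algebra_simps power2_eq_square)
    show "((\<lambda>(a,b). F (a+b+1, a-b)) has_sum (- theta2 (q^2)) * theta2 (q^2)) UNIV"
      by (rule has_sum_product_realI[OF has_sum_uminusI[OF theta2_has_sum[OF square_nome_bounds]]
            theta2_has_sum[OF square_nome_bounds]])
         (simp add: F_def sign_odd, rule powr_mult_eq_square_powr_mult[OF q(1)],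
          simp add: algebra_simps power2_eq_square)
  qed
  show ?thesis
    using has_sum_unique[OF lhs rhs] by (simp add: power2_eq_square)
qed

lemma theta2_square_duplication: "theta2 q ^ 2 = 2 * theta2 (q^2) * theta3 (q^2)"
proof -
  define F where "F = (\<lambda>(m,n). q powr ((real_of_int m + 1/2)^2) * q powr ((real_of_int n + 1/2)^2))"
  have lhs: "(F has_sum theta2 q * theta2 q) UNIV"
    by (rule has_sum_product_realI[OF theta2_has_sum[OF q] theta2_has_sum[OF q]]) (simp add: F_def)
  have rhs: "(F has_sum theta2 (q^2) * theta3 (q^2) + theta3 (q^2) * theta2 (q^2)) UNIV"
  proof (rule has_sum_int_pair_parity_split')
    show "((\<lambda>(a,b). F (a+b, a-b)) has_sum theta2 (q^2) * theta3 (q^2)) UNIV"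
      by (rule has_sum_product_realI[OF theta2_has_sum[OF square_nome_bounds] theta3_has_sum[OF square_nome_bounds]])
         (simp add: F_def, rule powr_mult_eq_square_powr_mult[OF q(1)], simp add: algebra_simps power2_eq_square)
    show "((\<lambda>(a,b). F (a+b, a-b-1)) has_sum theta3 (q^2) * theta2 (q^2)) UNIV"
      by (rule has_sum_product_realI[OF theta3_has_sum[OF square_nome_bounds] theta2_has_sum[OF square_nome_bounds]])
         (simp add: F_def, rule powr_mult_eq_square_powr_mult[OF q(1)], simp add: algebra_simps power2_eq_square)
  qed
  show ?thesis
    using has_sum_unique[OF lhs rhs] by (simp add: power2_eq_square)
qed

lemma jacobi_theta_quartic: "theta3 q ^ 4 = theta2 q ^ 4 + theta4 q ^ 4"
proof -
  have fourth_power: "x ^ 4 = (x ^ 2) ^ 2" for x :: real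
    by simp
  show ?thesis
    unfolding fourth_power theta3_square_duplication theta4_square_duplication theta2_square_duplication
    by (simp add: power2_eq_square algebra_simps)
qed

end

definition qpochhammer_sq :: "real \<Rightarrow> nat \<Rightarrow> real" where
  "qpochhammer_sq q m = (\<Prod>j=1..m. 1 - q^(2*j))"

definition euler_coeff :: "real \<Rightarrow> nat \<Rightarrow> real" where
  "euler_coeff q m = q^(m^2) / qpochhammer_sq q m"

definition euler_series :: "real \<Rightarrow> real \<Rightarrow> real" where
  "euler_series q x = (\<Sum>m. euler_coeff q m * x^m)"

lemma qpochhammer_sq_Suc: "qpochhammer_sq q (Suc m) = qpochhammer_sq q m * (1 - q^(2 * Suc m))"
  by (simp add: qpochhammer_sq_def)

lemma euler_coeff_0 [simp]: "euler_coeff q 0 = 1"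
  by (simp add: euler_coeff_def qpochhammer_sq_def)

text \<open>\<open>euler_corr q k\<close> is the coefficient of \<open>x\<^sup>k\<close> in \<open>euler_series q x * euler_series q (1/x)\<close>.\<close>

definition euler_corr :: "real \<Rightarrow> nat \<Rightarrow> real" where
  "euler_corr q k = (\<Sum>l. euler_coeff q (l+k) * euler_coeff q l)"

definition euler_corr_weighted :: "real \<Rightarrow> nat \<Rightarrow> real" where
  "euler_corr_weighted q k = (\<Sum>l. q^(2*l) * euler_coeff q (l+k) * euler_coeff q l)"

context
  fixes q :: real
  assumes q: "0 < q" "q < 1"
begin

lemma qpochhammer_sq_ge: "(1 - q^2)^m \<le> qpochhammer_sq q m"
proof (induction m)
  case 0
  then show ?case
    by (simp add: qpochhammer_sq_def)
next
  case (Suc m)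
  have "q^(2 * Suc m) \<le> q^2"
    using q by (intro power_decreasing) auto
  moreover have "0 \<le> 1 - q^2"
    using q by (simp add: power_le_one)
  moreover have "0 \<le> (1 - q^2)^m"
    using \<open>0 \<le> 1 - q^2\<close> by simp
  ultimately have "(1 - q^2)^m * (1 - q^2) \<le> qpochhammer_sq q m * (1 - q^(2 * Suc m))"
    using Suc.IH by (intro mult_mono) linarith+
  then show ?case
    by (simp only: power_Suc2 qpochhammer_sq_Suc)
qed

lemma qpochhammer_sq_pos: "0 < qpochhammer_sq q m"
  using qpochhammer_sq_ge[of m] square_nome_bounds[OF q] by (smt (verit) zero_less_power)

lemma euler_coeff_pos: "0 < euler_coeff q m"
  using qpochhammer_sq_pos q by (simp add: euler_coeff_def)

lemma euler_coeff_Suc: "euler_coeff q (Suc m) * (1 - q^(2 * Suc m)) = q^(2*m+1) * euler_coeff q m"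
proof -
  have "q^(2 * Suc m) < 1"
    using q by (intro power_less_one_iff[THEN iffD2]) auto
  moreover have "(Suc m)^2 = m^2 + (2*m+1)"
    by (simp add: power2_eq_square)
  then have "q^((Suc m)^2) = q^(m^2) * q^(2*m+1)"
    by (simp add: power_add)
  ultimately show ?thesis
    using qpochhammer_sq_pos[of m] by (simp add: euler_coeff_def qpochhammer_sq_Suc field_simps)
qed

lemma euler_coeff_Suc_eq:
  "euler_coeff q (Suc m) = q^(2*m+1) * euler_coeff q m + q^(2 * Suc m) * euler_coeff q (Suc m)"
  using euler_coeff_Suc[of m] by (simp add: algebra_simps)

lemma euler_coeff_abs_summable: "summable (\<lambda>m. norm (euler_coeff q m * x^m))"
proof -
  define c where "c = \<bar>x\<bar> / (1 - q^2)"
  have "0 < 1 - q^2"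
    using square_nome_bounds[OF q] by simp
  then have "0 \<le> c"
    by (simp add: c_def)
  have "(\<lambda>n. q^n * c) \<longlonglongrightarrow> 0 * c"
    using q by (intro tendsto_mult LIMSEQ_power_zero) auto
  then have "eventually (\<lambda>n. q^n * c < 1/2) sequentially"
    by (intro order_tendstoD) auto
  then obtain N where N: "\<And>n. N \<le> n \<Longrightarrow> q^n * c < 1/2"
    by (auto simp: eventually_sequentially)
  show ?thesis
  proof (rule summable_comparison_test'[OF summable_geometric[of "1/2::real"]])
    fix n assume "N \<le> n"
    have "norm (euler_coeff q n * x^n) = q^(n^2) * \<bar>x\<bar>^n / qpochhammer_sq q n"
      using qpochhammer_sq_pos[of n] q by (simp add: euler_coeff_def abs_mult power_abs)
    also have "\<dots> \<le> q^(n^2) * \<bar>x\<bar>^n / (1 - q^2)^n"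
      using qpochhammer_sq_ge[of n] qpochhammer_sq_pos[of n] \<open>0 < 1 - q^2\<close> q
      by (intro divide_left_mono mult_pos_pos zero_less_power) auto
    also have "\<dots> = (q^n * c)^n"
      by (simp add: c_def power_mult_distrib power_divide power2_eq_square power_mult)
    also have "\<dots> \<le> (1/2)^n"
      using N[OF \<open>N \<le> n\<close>] q \<open>0 \<le> c\<close> by (intro power_mono) auto
    finally show "norm (norm (euler_coeff q n * x^n)) \<le> (1/2)^n"
      by simp
  qed auto
qed

lemma euler_series_sums: "(\<lambda>m. euler_coeff q m * x^m) sums euler_series q x"
  unfolding euler_series_def by (intro summable_sums summable_norm_cancel[OF euler_coeff_abs_summable])

lemma euler_series_has_sum: "((\<lambda>m. euler_coeff q m * x^m) has_sum euler_series q x) UNIV"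
  by (rule norm_summable_imp_has_sum[OF euler_coeff_abs_summable euler_series_sums])

lemma euler_series_functional_eq: "euler_series q x = (1 + q * x) * euler_series q (q^2 * x)"
proof -
  let ?E = "euler_series q (q^2 * x)"
  have "(\<lambda>m. euler_coeff q (Suc m) * (q^2 * x)^(Suc m)) sums (?E - 1)"
    using euler_series_sums[of "q^2 * x"] by (subst sums_Suc_iff) simp
  then have "(\<lambda>m. euler_coeff q (Suc m) * (q^2 * x)^(Suc m) + q * x * (euler_coeff q m * (q^2 * x)^m))
      sums (?E - 1 + q * x * ?E)"
    by (intro sums_add sums_mult euler_series_sums)
  moreover have "euler_coeff q (Suc m) * (q^2 * x)^(Suc m) + q * x * (euler_coeff q m * (q^2 * x)^m)
      = euler_coeff q (Suc m) * x^(Suc m)" for m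
  proof -
    have p1: "(q^2 * x)^(Suc m) = q^(2 * Suc m) * x^(Suc m)" and p2: "(q^2 * x)^m = q^(2*m) * x^m"
      by (simp_all only: power_mult_distrib power_mult)
    have p3: "q * x * (euler_coeff q m * (q^(2*m) * x^m)) = q^(2*m+1) * euler_coeff q m * x^(Suc m)"
      by (simp add: mult_ac)
    have "euler_coeff q (Suc m) * (q^2 * x)^(Suc m) + q * x * (euler_coeff q m * (q^2 * x)^m)
        = x^(Suc m) * (q^(2 * Suc m) * euler_coeff q (Suc m) + q^(2*m+1) * euler_coeff q m)"
      unfolding p1 p2 p3 by (simp only: algebra_simps)
    also have "q^(2 * Suc m) * euler_coeff q (Suc m) + q^(2*m+1) * euler_coeff q m = euler_coeff q (Suc m)"
      using euler_coeff_Suc_eq[of m] by linarith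
    finally show ?thesis
      by simp
  qed
  ultimately have "(\<lambda>m. euler_coeff q (Suc m) * x^(Suc m)) sums (?E - 1 + q * x * ?E)"
    by simp
  then have "(\<lambda>m. euler_coeff q m * x^m) sums (?E - 1 + q * x * ?E + 1)"
    by (subst (asm) sums_Suc_iff) simp
  then show ?thesis
    using sums_unique2[OF euler_series_sums] by (simp add: algebra_simps)
qed

lemma euler_series_partial_product:
  "euler_series q x = (\<Prod>n<N. 1 + q^(2*n+1) * x) * euler_series q (q^(2*N) * x)"
proof (induction N)
  case (Suc N)
  have "euler_series q (q^(2*N) * x) = (1 + q^(2*N+1) * x) * euler_series q (q^(2 * Suc N) * x)"
    using euler_series_functional_eq[of "q^(2*N) * x"] by (simp add: power2_eq_square mult_ac)
  then show ?case
    by (simp only: prod.lessThan_Suc Suc.IH mult.assoc)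
qed simp

lemma euler_series_ge_1: "0 \<le> x \<Longrightarrow> 1 \<le> euler_series q x"
  using sum_le_suminf[of "\<lambda>m. euler_coeff q m * x^m" "{..<1}"] euler_series_sums[of x]
    euler_coeff_pos by (simp add: sums_iff euler_series_def less_imp_le)

lemma euler_coeff_le: "euler_coeff q m \<le> euler_series q 1"
  using sum_le_suminf[of "\<lambda>m. euler_coeff q m * 1^m" "{m}"] euler_series_sums[of 1]
    euler_coeff_pos by (simp add: sums_iff euler_series_def less_imp_le)

lemma euler_series_near_1:
  assumes "\<bar>y\<bar> \<le> 1"
  shows "\<bar>euler_series q y - 1\<bar> \<le> \<bar>y\<bar> * euler_series q 1"
proof -
  have tail: "(\<lambda>m. euler_coeff q (Suc m) * y^(Suc m)) sums (euler_series q y - 1)"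
    using euler_series_sums[of y] by (subst sums_Suc_iff) simp
  have "(\<lambda>m. euler_coeff q (Suc m) * 1^(Suc m)) sums (euler_series q 1 - 1)"
    using euler_series_sums[of 1] by (subst sums_Suc_iff) simp
  then have tail1: "(\<lambda>m. \<bar>y\<bar> * euler_coeff q (Suc m)) sums (\<bar>y\<bar> * (euler_series q 1 - 1))"
    by (intro sums_mult) simp
  have bound: "norm (euler_coeff q (Suc m) * y^(Suc m)) \<le> \<bar>y\<bar> * euler_coeff q (Suc m)" for m
  proof -
    have "\<bar>y\<bar>^(Suc m) \<le> \<bar>y\<bar>"
      using assms by (simp add: power_le_one mult_left_le)
    then show ?thesis
      using euler_coeff_pos[of "Suc m"] by (simp add: abs_mult power_abs mult_right_mono mult.commute)
  qed
  have summable: "summable (\<lambda>m. norm (euler_coeff q (Suc m) * y^(Suc m)))"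
    by (rule summable_comparison_test[OF _ sums_summable[OF tail1]]) (use bound in auto)
  have "norm (euler_series q y - 1) \<le> (\<Sum>m. norm (euler_coeff q (Suc m) * y^(Suc m)))"
    using tail summable_norm[OF summable] by (simp add: sums_iff)
  also have "\<dots> \<le> \<bar>y\<bar> * (euler_series q 1 - 1)"
    using suminf_le[OF bound summable sums_summable[OF tail1]] tail1 by (simp add: sums_iff)
  also have "\<dots> \<le> \<bar>y\<bar> * euler_series q 1"
    by (simp add: mult_left_mono)
  finally show ?thesis
    by simp
qed

lemma euler_series_tendsto_1: "(\<lambda>N. euler_series q (q^(2*N) * x)) \<longlonglongrightarrow> 1"
proof -
  have "(\<lambda>N. (q^2)^N * x) \<longlonglongrightarrow> 0 * x"
    using square_nome_bounds[OF q] by (intro tendsto_mult LIMSEQ_power_zero) auto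
  then have null: "(\<lambda>N. q^(2*N) * x) \<longlonglongrightarrow> 0"
    by (simp add: power_mult)
  then have bound_null: "(\<lambda>N. \<bar>q^(2*N) * x\<bar> * euler_series q 1) \<longlonglongrightarrow> 0"
    using tendsto_mult[OF tendsto_rabs[OF null] tendsto_const[of "euler_series q 1"]] by simp
  have "eventually (\<lambda>N. \<bar>q^(2*N) * x\<bar> \<le> 1) sequentially"
    using order_tendstoD(2)[OF tendsto_rabs[OF null], of 1] by (auto elim: eventually_mono)
  then have "(\<lambda>N. euler_series q (q^(2*N) * x) - 1) \<longlonglongrightarrow> 0"
    by (intro Lim_null_comparison[OF _ bound_null]) (use euler_series_near_1 in \<open>auto elim: eventually_mono\<close>)
  from tendsto_add[OF this tendsto_const[of 1]] show ?thesis
    by simp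
qed

lemma euler_corr_summable: "summable (\<lambda>l. euler_coeff q (l+k) * euler_coeff q l)"
proof (rule summable_comparison_test)
  have "summable (euler_coeff q)"
    using euler_series_sums[of 1] by (simp add: sums_iff)
  then show "summable (\<lambda>l. euler_series q 1 * euler_coeff q l)"
    by (rule summable_mult)
  show "\<exists>N. \<forall>l\<ge>N. norm (euler_coeff q (l+k) * euler_coeff q l) \<le> euler_series q 1 * euler_coeff q l"
    using euler_coeff_le euler_coeff_pos
    by (auto simp: abs_mult abs_of_pos intro!: mult_right_mono less_imp_le)
qed

lemma euler_corr_weighted_summable: "summable (\<lambda>l. q^(2*l) * euler_coeff q (l+k) * euler_coeff q l)"
proof (rule summable_comparison_test[OF _ euler_corr_summable[of k]])
  have "q^(2*l) \<le> 1" for l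
    using q by (simp add: power_le_one)
  then show "\<exists>N. \<forall>l\<ge>N. norm (q^(2*l) * euler_coeff q (l+k) * euler_coeff q l)
      \<le> euler_coeff q (l+k) * euler_coeff q l"
    using q euler_coeff_pos
    by (auto simp: abs_mult abs_of_pos mult_left_le_one_le mult.assoc less_imp_le)
qed

lemma euler_corr_Suc_split:
  "euler_corr q (Suc k) = q^(2*k+1) * euler_corr_weighted q k + q^(2 * Suc k) * euler_corr_weighted q (Suc k)"
proof -
  have "euler_coeff q (l + Suc k) * euler_coeff q l
      = q^(2*k+1) * (q^(2*l) * euler_coeff q (l+k) * euler_coeff q l)
        + q^(2 * Suc k) * (q^(2*l) * euler_coeff q (l + Suc k) * euler_coeff q l)" for l
  proof -
    have e1: "q^(2*(l+k)+1) = q^(2*k+1) * q^(2*l)" and e2: "q^(2 * Suc (l+k)) = q^(2 * Suc k) * q^(2*l)"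
      by (simp_all add: power_add[symmetric] algebra_simps)
    have "euler_coeff q (l + Suc k)
        = q^(2*k+1) * q^(2*l) * euler_coeff q (l+k) + q^(2 * Suc k) * q^(2*l) * euler_coeff q (l + Suc k)"
      using euler_coeff_Suc_eq[of "l+k"] unfolding e1 e2 by simp
    from arg_cong[OF this, of "\<lambda>z. z * euler_coeff q l"] show ?thesis
      by (simp add: algebra_simps)
  qed
  moreover have "(\<lambda>l. q^(2*k+1) * (q^(2*l) * euler_coeff q (l+k) * euler_coeff q l)
        + q^(2 * Suc k) * (q^(2*l) * euler_coeff q (l + Suc k) * euler_coeff q l))
      sums (q^(2*k+1) * euler_corr_weighted q k + q^(2 * Suc k) * euler_corr_weighted q (Suc k))"
    unfolding euler_corr_weighted_def
    by (intro sums_add sums_mult summable_sums euler_corr_weighted_summable)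
  ultimately show ?thesis
    unfolding euler_corr_def by (simp add: sums_iff)
qed

lemma euler_corr_split: "euler_corr q k = euler_corr_weighted q k + q * euler_corr_weighted q (Suc k)"
proof -
  define f where "f l = (1 - q^(2*l)) * euler_coeff q (l+k) * euler_coeff q l" for l
  have "(\<lambda>l. euler_coeff q (l+k) * euler_coeff q l - q^(2*l) * euler_coeff q (l+k) * euler_coeff q l)
      sums (euler_corr q k - euler_corr_weighted q k)"
    unfolding euler_corr_def euler_corr_weighted_def
    by (intro sums_diff summable_sums euler_corr_summable euler_corr_weighted_summable)
  then have f_sums: "f sums (euler_corr q k - euler_corr_weighted q k)"
    unfolding f_def by (simp add: algebra_simps)
  have "f (Suc l) = q * (q^(2*l) * euler_coeff q (l + Suc k) * euler_coeff q l)" for l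
  proof -
    have "f (Suc l) = euler_coeff q (Suc l + k) * (euler_coeff q (Suc l) * (1 - q^(2 * Suc l)))"
      by (simp add: f_def algebra_simps)
    also have "\<dots> = euler_coeff q (Suc l + k) * (q^(2*l+1) * euler_coeff q l)"
      by (simp only: euler_coeff_Suc)
    finally show ?thesis
      by (simp add: algebra_simps)
  qed
  then have "(\<lambda>l. f (Suc l)) sums (q * euler_corr_weighted q (Suc k))"
    unfolding euler_corr_weighted_def by (simp only:) (intro sums_mult summable_sums euler_corr_weighted_summable)
  then have "f sums (q * euler_corr_weighted q (Suc k) + f 0)"
    by (simp add: sums_Suc_iff)
  then have "f sums (q * euler_corr_weighted q (Suc k))"
    by (simp add: f_def)
  from sums_unique2[OF f_sums this] show ?thesis
    by simp
qed

lemma euler_corr_Suc: "euler_corr q (Suc k) = q^(2*k+1) * euler_corr q k"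
proof -
  have "q^(2 * Suc k) = q^(2*k+1) * q"
    by simp
  then show ?thesis
    unfolding euler_corr_Suc_split euler_corr_split[of k] by (simp add: algebra_simps)
qed

lemma euler_corr_eq: "euler_corr q k = q^(k^2) * euler_corr q 0"
proof (induction k)
  case (Suc k)
  have "(Suc k)^2 = k^2 + (2*k+1)"
    by (simp add: power2_eq_square)
  then show ?case
    using Suc by (simp add: euler_corr_Suc power_add)
qed simp

lemma euler_corr_0_ge_1: "1 \<le> euler_corr q 0"
  using sum_le_suminf[OF euler_corr_summable[of 0], of "{0}"] euler_coeff_pos
  by (simp add: euler_corr_def less_imp_le)

lemma euler_corr_has_sum: "((\<lambda>l. euler_coeff q (l+k) * euler_coeff q l) has_sum euler_corr q k) UNIV"
  unfolding euler_corr_def using euler_corr_summable[of k] euler_coeff_pos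
  by (intro norm_summable_imp_has_sum summable_sums) (auto simp: abs_mult abs_of_pos)

lemma euler_series_mult_has_sum:
  assumes "x * y = 1"
  shows "((\<lambda>k::int. x ^ nat k * y ^ nat (-k) * euler_corr q (nat \<bar>k\<bar>)) has_sum
           euler_series q x * euler_series q y) UNIV"
proof -
  define G where "G = (\<lambda>(m::nat, l::nat). euler_coeff q m * x^m * (euler_coeff q l * y^l))"
  have "(G has_sum euler_series q x * euler_series q y) UNIV"
    by (rule has_sum_product_realI[OF euler_series_has_sum euler_series_has_sum])
       (simp add: G_def)
  \<comment> \<open>index the pairs \<open>(m, l)\<close> by their difference \<open>k = m - l\<close> and their minimum\<close>
  moreover have "((\<lambda>(k::int, l::nat). G (l + nat k, l + nat (-k))) has_sum s) UNIV \<longleftrightarrow> (G has_sum s) UNIV" for s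
    by (rule has_sum_reindex_bij_witness[where i = "\<lambda>(m,l). (int m - int l, min m l)"
          and j = "\<lambda>(k,l). (l + nat k, l + nat (-k))"]) (auto simp: split_beta)
  ultimately have sigma: "((\<lambda>(k::int, l::nat). G (l + nat k, l + nat (-k))) has_sum
      euler_series q x * euler_series q y) (Sigma UNIV (\<lambda>_. UNIV))"
    by simp
  have inner: "((\<lambda>l. G (l + nat k, l + nat (-k))) has_sum
      x ^ nat k * y ^ nat (-k) * euler_corr q (nat \<bar>k\<bar>)) UNIV" for k :: int
  proof -
    have "G (l + nat k, l + nat (-k))
        = x ^ nat k * y ^ nat (-k) * (euler_coeff q (l + nat k) * euler_coeff q (l + nat (-k)))" for l
    proof -
      have "x ^ (l + nat k) * y ^ (l + nat (-k)) = (x * y) ^ l * (x ^ nat k * y ^ nat (-k))"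
        by (simp only: power_add power_mult_distrib mult_ac)
      then show ?thesis
        using assms by (simp add: G_def mult_ac)
    qed
    moreover have "((\<lambda>l. euler_coeff q (l + nat k) * euler_coeff q (l + nat (-k))) has_sum
        euler_corr q (nat \<bar>k\<bar>)) UNIV"
      using euler_corr_has_sum[of "nat k"] euler_corr_has_sum[of "nat (-k)"]
      by (cases "0 \<le> k") (simp_all add: mult.commute)
    ultimately show ?thesis
      by (simp add: has_sum_cmult_right)
  qed
  show ?thesis
    by (rule has_sum_SigmaD[OF sigma]) (use inner in simp)
qed

lemma power_nat_abs_square_eq_powr: "q ^ ((nat \<bar>k\<bar>)^2) = q powr ((real_of_int k)^2)"
proof -
  have "real ((nat \<bar>k\<bar>)^2) = (real_of_int k)^2"
    by simp
  then show ?thesis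
    using powr_realpow[OF q(1), of "(nat \<bar>k\<bar>)^2"] by simp
qed

lemma euler_corr_nat_abs: "euler_corr q (nat \<bar>k\<bar>) = euler_corr q 0 * q powr ((real_of_int k)^2)"
  using euler_corr_eq[of "nat \<bar>k\<bar>"] by (simp add: power_nat_abs_square_eq_powr mult.commute)

lemma euler_series_1_square: "euler_series q 1 * euler_series q 1 = euler_corr q 0 * theta3 q"
proof -
  have "((\<lambda>k::int. euler_corr q 0 * q powr ((real_of_int k)^2)) has_sum euler_series q 1 * euler_series q 1) UNIV"
    using euler_series_mult_has_sum[of 1 1] by (simp add: euler_corr_nat_abs)
  from has_sum_unique[OF this has_sum_cmult_right[OF theta3_has_sum[OF q]]] show ?thesis .
qed

lemma euler_series_minus_1_square: "euler_series q (-1) * euler_series q (-1) = euler_corr q 0 * theta4 q"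
proof -
  have "(-1::real) ^ nat k * (-1) ^ nat (-k) = (-1) ^ nat \<bar>k\<bar>" for k :: int
    by (cases "0 \<le> k") simp_all
  then have "((\<lambda>k::int. euler_corr q 0 * ((-1) ^ nat \<bar>k\<bar> * q powr ((real_of_int k)^2))) has_sum
      euler_series q (-1) * euler_series q (-1)) UNIV"
    using euler_series_mult_has_sum[of "-1" "-1"] by (simp add: euler_corr_nat_abs mult_ac)
  from has_sum_unique[OF this has_sum_cmult_right[OF theta4_has_sum[OF q]]] show ?thesis .
qed

lemma euler_series_1_pos: "0 < euler_series q 1"
  using euler_series_ge_1[of 1] by simp

lemma odd_powers_less_1: "q^(2*n+1) < 1"
  using q by (intro power_less_one_iff[THEN iffD2]) auto

lemma odd_partial_product_minus_pos: "0 < (\<Prod>n<N. 1 + q^(2*n+1) * (-1))"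
  using odd_powers_less_1 by (intro prod_pos) simp

lemma euler_series_minus_1_pos: "0 < euler_series q (-1)"
proof -
  obtain N where "0 < euler_series q (q^(2*N) * (-1))"
    using order_tendstoD(1)[OF euler_series_tendsto_1[of "-1"], of 0]
    by (auto simp: eventually_sequentially)
  then show ?thesis
    using odd_partial_product_minus_pos[of N] unfolding euler_series_partial_product[of "-1" N] by simp
qed

lemma theta4_pos: "0 < theta4 q"
proof -
  have "0 < euler_corr q 0 * theta4 q"
    using euler_series_minus_1_pos by (simp flip: euler_series_minus_1_square)
  then show ?thesis
    using euler_corr_0_ge_1 by (simp add: zero_less_mult_iff)
qed

lemma ln_euler_series_ratio:
  "ln (euler_series q 1 / euler_series q (-1)) = (ln (theta3 q) - ln (theta4 q)) / 2"
proof -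
  have "(euler_series q 1 / euler_series q (-1))^2 = theta3 q / theta4 q"
    using euler_corr_0_ge_1
    by (simp add: power2_eq_square euler_series_1_square euler_series_minus_1_square)
  then have "2 * ln (euler_series q 1 / euler_series q (-1)) = ln (theta3 q / theta4 q)"
    using euler_series_1_pos euler_series_minus_1_pos by (metis ln_realpow of_nat_numeral divide_pos_pos)
  then show ?thesis
    using theta3_pos[OF q] theta4_pos by (simp add: ln_div)
qed

lemma artanh_odd_powers_sums: "(\<lambda>n. artanh (q^(2*n+1))) sums ((ln (theta3 q) - ln (theta4 q)) / 4)"
proof -
  define T where "T x N = euler_series q (q^(2*N) * x)" for x N
  define P where "P N = (\<Prod>n<N. (1 + q^(2*n+1)) / (1 - q^(2*n+1)))" for N
  have tail_pos: "0 < T 1 N" "0 < T (-1) N" for N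
  proof -
    show "0 < T 1 N"
      unfolding T_def using euler_series_ge_1[of "q^(2*N) * 1"] q by simp
    have "euler_series q (-1) = (\<Prod>n<N. 1 + q^(2*n+1) * (-1)) * T (-1) N"
      unfolding T_def by (rule euler_series_partial_product)
    then show "0 < T (-1) N"
      using euler_series_minus_1_pos odd_partial_product_minus_pos[of N] by (simp add: zero_less_mult_iff)
  qed
  have partial_sum: "(\<Sum>n<N. artanh (q^(2*n+1))) = ln (P N) / 2" for N
  proof -
    have "(1 + q^(2*n+1)) / (1 - q^(2*n+1)) \<noteq> 0" for n
      using odd_powers_less_1[of n] q by (smt (verit) divide_eq_0_iff zero_less_power)
    then show ?thesis
      unfolding P_def artanh_def by (simp add: ln_prod sum_divide_distrib)
  qed
  have P_eq: "P N = (euler_series q 1 * T (-1) N) / (euler_series q (-1) * T 1 N)" for N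
    using euler_series_partial_product[of 1 N] euler_series_partial_product[of "-1" N]
      tail_pos[of N] by (simp add: P_def T_def prod_dividef field_simps)
  have "(\<lambda>N. (euler_series q 1 * T (-1) N) / (euler_series q (-1) * T 1 N))
      \<longlonglongrightarrow> (euler_series q 1 * 1) / (euler_series q (-1) * 1)"
    unfolding T_def using euler_series_minus_1_pos
    by (intro tendsto_intros euler_series_tendsto_1) simp
  then have "P \<longlonglongrightarrow> euler_series q 1 / euler_series q (-1)"
    by (simp flip: P_eq)
  then have "(\<lambda>N. ln (P N) / 2) \<longlonglongrightarrow> ln (euler_series q 1 / euler_series q (-1)) / 2"
    using euler_series_1_pos euler_series_minus_1_pos by (intro tendsto_intros) auto
  then show ?thesis
    unfolding sums_def partial_sum ln_euler_series_ratio by simp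
qed

end

lemma artanh_sums:
  fixes y :: real
  assumes "\<bar>y\<bar> < 1"
  shows "(\<lambda>j. y^(2*j+1) / real (2*j+1)) sums artanh y"
proof -
  define x where "x = (1 + y) / (1 - y)"
  have "0 < x" and "(x - 1) / (x + 1) = y"
    using assms by (auto simp: x_def field_simps)
  then have "(\<lambda>j. 2 * y^(2*j+1) / real (2*j+1)) sums ln x"
    using ln_series_quadratic[of x] by simp
  then have "(\<lambda>j. 2 * y^(2*j+1) / real (2*j+1) / 2) sums (ln x / 2)"
    by (rule sums_divide)
  moreover have "(\<lambda>j. 2 * y^(2*j+1) / real (2*j+1) / 2) = (\<lambda>j. y^(2*j+1) / real (2*j+1))"
    by (auto simp: fun_eq_iff field_simps)
  ultimately show ?thesis
    by (simp add: artanh_def x_def)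
qed

lemma odd_double_series_has_sum:
  fixes t :: real
  assumes t: "0 < t" "t < 1"
  shows "((\<lambda>(r::nat, k::nat). t ^ ((2*r - 1) * (2*k - 1)) / real (2*r - 1)) has_sum
           (ln (theta3 t) - ln (theta4 t)) / 4) ({1..} \<times> {1..})"
proof -
  define f where "f = (\<lambda>(n::nat, j::nat). (t^(2*n+1))^(2*j+1) / real (2*j+1))"
  have inner: "((\<lambda>j. f (n, j)) has_sum artanh (t^(2*n+1))) UNIV" for n
    unfolding f_def using artanh_sums[of "t^(2*n+1)"] odd_powers_less_1[OF t, of n] t
    by (intro sums_nonneg_imp_has_sum) auto
  have "0 \<le> artanh (t^(2*n+1))" for n
    using inner by (rule has_sum_nonneg) (use t in \<open>simp add: f_def\<close>)
  then have outer: "((\<lambda>n. artanh (t^(2*n+1))) has_sum (ln (theta3 t) - ln (theta4 t)) / 4) UNIV"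
    by (intro sums_nonneg_imp_has_sum artanh_odd_powers_sums[OF t])
  have "f summable_on UNIV \<times> UNIV"
    using summable_on_SigmaI[OF inner has_sum_imp_summable[OF outer]] t by (simp add: f_def)
  then have "(f has_sum (ln (theta3 t) - ln (theta4 t)) / 4) UNIV"
    using has_sum_SigmaI[OF inner outer] by simp
  moreover have "((\<lambda>(r,k). f (k - 1, r - 1)) has_sum s) ({1..} \<times> {1..}) \<longleftrightarrow> (f has_sum s) UNIV" for s
    by (rule has_sum_reindex_bij_witness[where i = "\<lambda>(n,j). (j+1, n+1)" and j = "\<lambda>(r,k). (k-1, r-1)"])
       (auto simp: split_beta)
  moreover have "t ^ ((2*r - 1) * (2*k - 1)) / real (2*r - 1) = f (k - 1, r - 1)" if "1 \<le> r" "1 \<le> k" for r k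
  proof -
    have "(2*r - 1) * (2*k - 1) = (2*(k-1)+1) * (2*(r-1)+1)" and "2*r - 1 = 2*(r-1)+1"
      using that by (cases r; cases k; simp add: algebra_simps)+
    then show ?thesis
      by (simp only: f_def case_prod_conv power_mult)
  qed
  ultimately show ?thesis
    by (subst has_sum_cong[where g = "\<lambda>(r,k). f (k - 1, r - 1)"]) auto
qed

lemma pochhammer_2_real: "pochhammer (2::real) n = fact (Suc n)"
  using pochhammer_rec[of "1::real" n] pochhammer_fact[of "Suc n", where 'a=real] by simp

lemma pochhammer_three_halves: "pochhammer (3/2::real) n = pochhammer (1/2) n * (2 * real n + 1)"
proof -
  have "pochhammer (1/2::real) (Suc n) = 1/2 * pochhammer (3/2) n"
    using pochhammer_rec[of "1/2::real" n] by simp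
  moreover have "pochhammer (1/2::real) (Suc n) = (1/2 + real n) * pochhammer (1/2) n"
    using pochhammer_rec'[of "1/2::real" n] by simp
  ultimately show ?thesis
    by (simp add: algebra_simps)
qed

lemma hyp2F1_1_1_2:
  fixes z :: real
  assumes "\<bar>z\<bar> < 1"
  shows "z * hyp2F1 1 1 2 z = - ln (1 - z)"
proof -
  have summand: "pochhammer 1 n * pochhammer 1 n / pochhammer 2 n * z^n / fact n = z^n / real (Suc n)" for n
  proof -
    have "pochhammer (2::real) n = real (Suc n) * fact n"
      by (simp add: pochhammer_2_real del: of_nat_Suc)
    moreover have "(fact n :: real) \<noteq> 0" and "real (Suc n) \<noteq> 0"
      by simp_all
    ultimately show ?thesis
      by (simp add: pochhammer_fact[symmetric] field_simps del: of_nat_Suc)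
  qed
  have "summable (\<lambda>n. z^n / real (Suc n))"
    using assms by (intro summable_comparison_test[OF _ summable_geometric[of "\<bar>z\<bar>"]])
      (auto simp: power_abs divide_le_eq mult_le_cancel_left1)
  then have "(\<lambda>n. z * (z^n / real (Suc n))) sums (z * hyp2F1 1 1 2 z)"
    unfolding hyp2F1_def summand by (intro sums_mult summable_sums)
  moreover have "(\<lambda>n. - ((-(-z))^n) / of_nat n) sums ln (1 + (-z))"
    using assms by (intro ln_series') auto
  then have "(\<lambda>n. - (z^(Suc n)) / real (Suc n)) sums ln (1 - z)"
    by (subst sums_Suc_iff) simp
  then have "(\<lambda>n. z * (z^n / real (Suc n))) sums (- ln (1 - z))"
    using sums_minus by fastforce
  ultimately show ?thesis
    using sums_unique2 by blast
qed

lemma hyp2F1_half_1_three_halves: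
  fixes u :: real
  assumes "\<bar>u\<bar> < 1"
  shows "u * hyp2F1 (1/2) 1 (3/2) (u^2) = artanh u"
proof -
  have summand: "pochhammer (1/2) n * pochhammer 1 n / pochhammer (3/2) n * (u^2)^n / fact n
      = (u^2)^n / (2 * real n + 1)" for n
  proof -
    have "pochhammer (1/2::real) n \<noteq> 0" and "(fact n :: real) \<noteq> 0" and "2 * real n + 1 \<noteq> 0"
      using pochhammer_pos[of "1/2::real" n] by simp_all
    then show ?thesis
      by (simp add: pochhammer_three_halves pochhammer_fact[symmetric] mult_divide_mult_cancel_left)
  qed
  have "u^2 < 1"
    using assms by (simp add: abs_square_less_1)
  then have "summable (\<lambda>n. (u^2)^n / (2 * real n + 1))"
    by (intro summable_comparison_test[OF _ summable_geometric[of "u^2"]])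
      (auto simp: divide_le_eq mult_le_cancel_left1)
  then have "(\<lambda>n. u * ((u^2)^n / (2 * real n + 1))) sums (u * hyp2F1 (1/2) 1 (3/2) (u^2))"
    unfolding hyp2F1_def summand by (intro sums_mult summable_sums)
  moreover have "u * ((u^2)^n / (2 * real n + 1)) = u^(2*n+1) / real (2*n+1)" for n
    by (simp add: power_mult[symmetric] mult.commute)
  ultimately show ?thesis
    using sums_unique2[OF _ artanh_sums[OF assms]] by simp
qed

lemma alpha_eq_square: "alpha q = (theta2 q ^ 2 / theta3 q ^ 2)^2"
  by (simp add: alpha_def power_divide flip: power_mult)

context
  fixes q :: real
  assumes q: "0 < q" "q < 1"
begin

lemma one_minus_alpha: "1 - alpha q = (theta4 q / theta3 q)^4"
proof -
  have "theta3 q ^ 4 \<noteq> 0"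
    using theta3_pos[OF q] by simp
  then have "1 - alpha q = (theta3 q ^ 4 - theta2 q ^ 4) / theta3 q ^ 4"
    by (simp add: alpha_def field_simps)
  then show ?thesis
    by (simp add: jacobi_theta_quartic[OF q] power_divide)
qed

lemma alpha_bounds: "0 < alpha q" "alpha q < 1"
proof -
  show "0 < alpha q"
    using theta2_pos[OF q] theta3_pos[OF q] by (simp add: alpha_def)
  have "0 < 1 - alpha q"
    using theta4_pos[OF q] theta3_pos[OF q] by (simp add: one_minus_alpha)
  then show "alpha q < 1"
    by simp
qed

lemma ln_one_minus_alpha: "ln (1 - alpha q) = 4 * (ln (theta4 q) - ln (theta3 q))"
  using theta4_pos[OF q] theta3_pos[OF q] by (simp add: one_minus_alpha ln_realpow ln_div)

lemma artanh_sqrt_alpha: "artanh (sqrt (alpha q)) = ln (theta3 (sqrt q)) - ln (theta4 (sqrt q))"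
proof -
  define u where "u = theta2 q ^ 2 / theta3 q ^ 2"
  have s: "0 < sqrt q" "sqrt q < 1" and s2: "sqrt q ^ 2 = q"
    using q by simp_all
  have "sqrt (alpha q) = u"
    using theta3_pos[OF q] by (simp add: alpha_eq_square u_def)
  moreover have "1 + u = theta3 (sqrt q) ^ 2 / theta3 q ^ 2" and "1 - u = theta4 (sqrt q) ^ 2 / theta3 q ^ 2"
    using theta3_square_duplication[OF s] theta4_square_duplication[OF s] theta3_pos[OF q]
    by (simp_all add: s2 u_def field_simps)
  moreover have "0 < theta3 (sqrt q)" "0 < theta4 (sqrt q)"
    using theta3_pos[OF s] theta4_pos[OF s] by simp_all
  ultimately show ?thesis
    using theta3_pos[OF q] by (simp add: artanh_def ln_div ln_realpow)
qed

lemma sqrt_power_odd_product_eq_powr: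
  assumes "1 \<le> r" "1 \<le> k"
  shows "sqrt q ^ ((2*r - 1) * (2*k - 1)) = q powr (2 * (real r - 1/2) * (real k - 1/2))"
proof -
  have r: "real (2*r - 1) = 2 * real r - 1" and k: "real (2*k - 1) = 2 * real k - 1"
    using assms by (simp_all add: of_nat_diff)
  have "real ((2*r - 1) * (2*k - 1)) / 2 = 2 * (real r - 1/2) * (real k - 1/2)"
    by (simp only: of_nat_mult r k) (simp add: field_simps)
  then show ?thesis
    using q by (simp add: powr_half_sqrt[symmetric] powr_realpow[symmetric] powr_powr)
qed

lemma powr_double_series_has_sum:
  "((\<lambda>(r::nat, k::nat). q powr (2 * (real r - 1/2) * (real k - 1/2)) / real (2*r - 1)) has_sum
     (ln (theta3 (sqrt q)) - ln (theta4 (sqrt q))) / 4) ({1..} \<times> {1..})"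
proof (rule has_sum_cong[THEN iffD1, OF _ odd_double_series_has_sum])
  fix z :: "nat \<times> nat"
  assume "z \<in> {1..} \<times> {1..}"
  then obtain r k where "z = (r, k)" "1 \<le> r" "1 \<le> k"
    by auto
  then show "(\<lambda>(r, k). sqrt q ^ ((2*r - 1) * (2*k - 1)) / real (2*r - 1)) z
      = (\<lambda>(r, k). q powr (2 * (real r - 1/2) * (real k - 1/2)) / real (2*r - 1)) z"
    using sqrt_power_odd_product_eq_powr[OF \<open>1 \<le> r\<close> \<open>1 \<le> k\<close>] by simp
qed (use q in auto)

end

theorem mainTheorem10:
  fixes q :: real
  assumes "0 < q" and "q < 1"
  shows "((\<lambda>(r::nat, k::nat). q ^ ((2*r - 1) * (2*k - 1)) / real (2*r - 1))
            has_sum (alpha q / 16 * hyp2F1 1 1 2 (alpha q))) ({1..} \<times> {1..})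
       \<and> alpha q / 16 * hyp2F1 1 1 2 (alpha q) = - (1/16) * ln (1 - alpha q)
       \<and> ((\<lambda>(r::nat, k::nat). q powr (2 * (real r - 1/2) * (real k - 1/2)) / real (2*r - 1))
            has_sum (sqrt (alpha q) / 4 * hyp2F1 (1/2) 1 (3/2) (alpha q))) ({1..} \<times> {1..})"
proof -
  note alpha = alpha_bounds[OF assms]
  have value1: "alpha q / 16 * hyp2F1 1 1 2 (alpha q) = - (1/16) * ln (1 - alpha q)"
    using hyp2F1_1_1_2[of "alpha q"] alpha by simp
  have value2: "sqrt (alpha q) / 4 * hyp2F1 (1/2) 1 (3/2) (alpha q)
      = (ln (theta3 (sqrt q)) - ln (theta4 (sqrt q))) / 4"
    using hyp2F1_half_1_three_halves[of "sqrt (alpha q)"] alpha artanh_sqrt_alpha[OF assms] by simp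
  have log_value: "- (1/16) * ln (1 - alpha q) = (ln (theta3 q) - ln (theta4 q)) / 4"
    by (simp add: ln_one_minus_alpha[OF assms] field_simps)
  show ?thesis
    unfolding value1 log_value value2
    using odd_double_series_has_sum[OF assms] powr_double_series_has_sum[OF assms] by blast
qed

end
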